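(* Let $\mathcal{N}$ be either the $(2n+1)$-dimensional Heisenberg algebra ($q=2$) or the $(4n+3)$-dimensional quaternionic Heisenberg algebra ($q=4$) over $\mathbb{R}$, with basis $e_1,\dots,e_{qn}$ of $\mathcal{V}$ and $Z_1,\dots,Z_{q-1}$ of $\mathcal{Z}$ as in the context. Let $f:\mathcal{N}\to\mathcal{N}$ be a Lie ring homomorphism with $f(\mathcal{V})\subseteq\mathcal{V}$, $f(Z_i)\neq0$ for $i=1,\dots,q-1$, and $f(e_1)=e_1$. Let $g=\pi\circ f\circ\iota:\mathcal{N}_2\to\mathcal{N}_2$. Then: (1) $g$ is a Lie ring homomorphism with $g(\mathcal{V}_2)\subseteq\mathcal{V}_2$, $g(Z_i)\neq0$ for all $i$, and $g|_{\mathcal{Z}}=f|_{\mathcal{Z}}$; (2) if $X\in\mathbb{R}\text{-span}\{e_1,e_{q+1},\dots,e_{qn}\}$, then $f_{e_i}(X)=0$ for each $i=2,\dots,q$; (3) for all $x\in\mathbb{R}$ and $i,j\in\{2,\dots,q\}$, $f_{e_i}(xe_j)=f_{Z_{i-1}}(xZ_{j-1})$.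
   Context: A Lie ring homomorphism is an additive bracket-preserving map. Heisenberg case: basis $X_1,Y_1,\dots,X_n,Y_n,Z_1$ with $[X_t,Y_t]=Z_1$ and other brackets zero; set $(e_1,\dots,e_{2n})=(X_1,Y_1,\dots,X_n,Y_n)$. Quaternionic case: basis $X_t,Y_t,V_t,W_t$ ($t=1..n$), $Z_1,Z_2,Z_3$ with nonzero brackets (and antisymmetric counterparts) $[X_t,Y_t]=Z_1$, $[X_t,V_t]=Z_2$, $[X_t,W_t]=Z_3$, $[Y_t,V_t]=Z_3$, $[Y_t,W_t]=-Z_2$, $[V_t,W_t]=Z_1$, brackets between different $t$ zero; set $(e_1,\dots,e_{4n})=(X_1,Y_1,V_1,W_1,\dots,X_n,Y_n,V_n,W_n)$. In both cases $\mathcal{V}=\mathbb{R}\text{-span}\{e_1,\dots,e_{qn}\}$, $\mathcal{Z}=\mathbb{R}\text{-span}\{Z_1,\dots,Z_{q-1}\}$ is central, $\mathcal{V}_1=\mathbb{R}\text{-span}\{e_1,\dots,e_q\}$, $\mathcal{V}_2=\mathbb{R}\text{-span}\{e_{q+1},\dots,e_{qn}\}$, $\mathcal{N}_2=\mathcal{V}_2\oplus\mathcal{Z}$ (a subalgebra), $\pi:\mathcal{N}\to\mathcal{N}_2$ is the projection $\pi(X+Y)=Y$ for $X\in\mathcal{V}_1$, $Y\in\mathcal{N}_2$, and $\iota:\mathcal{N}_2\to\mathcal{N}$ the inclusion. For $X\in\mathcal{N}$, write $f(X)=\sum_{i=1}^{qn}f_{e_i}(X)e_i+\sum_{i=1}^{q-1}f_{Z_i}(X)Z_i$.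 *)

theory Defs
  imports Complex_Main "HOL-Library.Function_Algebras"
begin

text \<open>Basis labels: E i stands for e_i (i = 1..q*n), Zc k stands for Z_k (k = 1..q-1).
Addition and zero are the pointwise ones from Function_Algebras.\<close>

datatype idx = E nat | Zc nat

type_synonym elt = "idx \<Rightarrow> real"

definition basisE :: "nat \<Rightarrow> elt" where
  "basisE i = (\<lambda>k. if k = E i then 1 else 0)"

definition basisZ :: "nat \<Rightarrow> elt" where
  "basisZ i = (\<lambda>k. if k = Zc i then 1 else 0)"

definition smult :: "real \<Rightarrow> elt \<Rightarrow> elt" where
  "smult x v = (\<lambda>k. x * v k)"

text \<open>Structure constants within one block; positions 0..q-1 within the block
(q = 2: X,Y; q = 4: X,Y,V,W).  s0 q a b k for a < b is the Z_k coefficient of [a,b].\<close>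

fun s0 :: "nat \<Rightarrow> nat \<Rightarrow> nat \<Rightarrow> nat \<Rightarrow> real" where
  "s0 q a b k =
    (if q = 2 then (if a = 0 \<and> b = 1 \<and> k = 1 then 1 else 0)
     else if q = 4 then
       (if (a,b,k) = (0,1,1) then 1
        else if (a,b,k) = (0,2,2) then 1
        else if (a,b,k) = (0,3,3) then 1
        else if (a,b,k) = (1,2,3) then 1
        else if (a,b,k) = (1,3,2) then -1
        else if (a,b,k) = (2,3,1) then 1
        else 0)
     else 0)"

definition blockc :: "nat \<Rightarrow> nat \<Rightarrow> nat \<Rightarrow> nat \<Rightarrow> real" where
  "blockc q a b k = (if a < b then s0 q a b k else if b < a then - s0 q b a k else 0)"

text \<open>[e_a, e_b] = sum_k strc q a b k Z_k (a, b in 1..q*n).\<close>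
definition strc :: "nat \<Rightarrow> nat \<Rightarrow> nat \<Rightarrow> nat \<Rightarrow> real" where
  "strc q a b k = (if (a - 1) div q = (b - 1) div q
                   then blockc q ((a - 1) mod q) ((b - 1) mod q) k else 0)"

definition br :: "nat \<Rightarrow> nat \<Rightarrow> elt \<Rightarrow> elt \<Rightarrow> elt" where
  "br q n x y = (\<lambda>k. case k of E i \<Rightarrow> 0
     | Zc m \<Rightarrow> (\<Sum>a\<in>{1..q*n}. \<Sum>b\<in>{1..q*n}. x (E a) * y (E b) * strc q a b m))"

definition NN :: "nat \<Rightarrow> nat \<Rightarrow> elt set" where
  "NN q n = {v. \<forall>i. (v (E i) \<noteq> 0 \<longrightarrow> 1 \<le> i \<and> i \<le> q*n) \<and> (v (Zc i) \<noteq> 0 \<longrightarrow> 1 \<le> i \<and> i \<le> q - 1)}"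

definition VV :: "nat \<Rightarrow> nat \<Rightarrow> elt set" where
  "VV q n = {v \<in> NN q n. \<forall>i. v (Zc i) = 0}"

definition ZZ :: "nat \<Rightarrow> nat \<Rightarrow> elt set" where
  "ZZ q n = {v \<in> NN q n. \<forall>i. v (E i) = 0}"

definition VV2 :: "nat \<Rightarrow> nat \<Rightarrow> elt set" where
  "VV2 q n = {v \<in> VV q n. \<forall>i. i \<le> q \<longrightarrow> v (E i) = 0}"

definition NN2 :: "nat \<Rightarrow> nat \<Rightarrow> elt set" where
  "NN2 q n = {v \<in> NN q n. \<forall>i. i \<le> q \<longrightarrow> v (E i) = 0}"

text \<open>R-span of e_1, e_{q+1}, ..., e_{qn}.\<close>
definition W1 :: "nat \<Rightarrow> nat \<Rightarrow> elt set" where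
  "W1 q n = {v \<in> VV q n. \<forall>i. 2 \<le> i \<and> i \<le> q \<longrightarrow> v (E i) = 0}"

definition proj2 :: "nat \<Rightarrow> elt \<Rightarrow> elt" where
  "proj2 q v = (\<lambda>k. case k of E i \<Rightarrow> (if i \<le> q then 0 else v k) | Zc m \<Rightarrow> v k)"

definition lie_ring_hom :: "nat \<Rightarrow> nat \<Rightarrow> elt set \<Rightarrow> elt set \<Rightarrow> (elt \<Rightarrow> elt) \<Rightarrow> bool" where
  "lie_ring_hom q n A B h \<longleftrightarrow> h ` A \<subseteq> B \<and>
     (\<forall>x\<in>A. \<forall>y\<in>A. h (x + y) = h x + h y \<and> h (br q n x y) = br q n (h x) (h y))"

end

theory Submission imports Defs begin

text \<open>Everything follows from the adjoint action of e_1: for 1 \<le> m \<le> q-1 the Z_m coordinate of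
[e_1, v] is the e_(m+1) coordinate of v.  Since f fixes e_1, applying f to [e_1, x] shows that the
e_(m+1) coordinate of f x equals the Z_m coordinate of f [e_1, x].  This gives (2) and (3) directly;
and since every central element is of the form [e_1, w], f maps the centre into the centre, which
together with (2) makes the compression g of f to N_2 a Lie ring homomorphism.\<close>

lemma le_mult_if_one_le: "i \<le> q \<Longrightarrow> 1 \<le> n \<Longrightarrow> (i::nat) \<le> q * n"
  by (metis le_trans mult_le_mono2 mult.right_neutral)

lemma br_E [simp]: "br q n x y (E i) = 0"
  by (simp add: br_def)

lemma proj2_E [simp]: "proj2 q v (E i) = (if i \<le> q then 0 else v (E i))"
  and proj2_Zc [simp]: "proj2 q v (Zc m) = v (Zc m)"
  by (simp_all add: proj2_def)

lemma proj2_add: "proj2 q (u + v) = proj2 q u + proj2 q v"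
  by (rule ext) (simp add: proj2_def split: idx.split)

lemma proj2_br: "proj2 q (br q n x y) = br q n x y"
  by (rule ext) (simp add: proj2_def split: idx.split)

lemma strc_1_left:
  assumes q: "q = 2 \<or> q = 4" and b: "1 \<le> b"
  shows "strc q 1 b m = (if b = m + 1 \<and> 1 \<le> m \<and> m + 1 \<le> q then 1 else 0)"
proof (cases "b \<le> q")
  case True
  with b q show ?thesis by (auto simp: strc_def blockc_def)
next
  case False
  then have "(b - 1) div q \<noteq> 0" using q by auto
  with False q show ?thesis by (auto simp: strc_def)
qed

lemma strc_1_1: "strc q 1 1 m = 0"
  by (simp add: strc_def blockc_def)

lemma strc_first_block_other_block:
  assumes "0 < q" "1 \<le> a" "1 \<le> b" "(a \<le> q) \<noteq> (b \<le> q)"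
  shows "strc q a b m = 0"
proof -
  have "((c - 1) div q = 0) = (c \<le> q)" if "1 \<le> c" for c
    using that \<open>0 < q\<close> by (auto simp: div_eq_0_iff)
  with assms show ?thesis by (auto simp: strc_def)
qed

lemma br_basisE_1_Zc:
  assumes q: "q = 2 \<or> q = 4" and n: "1 \<le> n"
  shows "br q n (basisE 1) v (Zc m) = (if 1 \<le> m \<and> m + 1 \<le> q then v (E (m + 1)) else 0)"
proof -
  have "br q n (basisE 1) v (Zc m)
      = (\<Sum>a\<in>{1..q*n}. if a = 1 then (\<Sum>b\<in>{1..q*n}. v (E b) * strc q 1 b m) else 0)"
    unfolding br_def basisE_def idx.case by (rule sum.cong) auto
  also have "\<dots> = (\<Sum>b\<in>{1..q*n}. v (E b) * strc q 1 b m)"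
    using q n by simp
  also have "\<dots> = (\<Sum>b\<in>{1..q*n}. if b = m + 1 then (if 1 \<le> m \<and> m + 1 \<le> q then v (E b) else 0) else 0)"
    by (rule sum.cong) (use strc_1_left[OF q] in auto)
  also have "\<dots> = (if 1 \<le> m \<and> m + 1 \<le> q then v (E (m + 1)) else 0)"
    using le_mult_if_one_le[OF _ n] by (auto simp: sum.delta')
  finally show ?thesis .
qed

lemma br_proj2:
  assumes q: "0 < q"
    and u: "\<And>a. 2 \<le> a \<Longrightarrow> a \<le> q \<Longrightarrow> u (E a) = 0"
    and v: "\<And>a. 2 \<le> a \<Longrightarrow> a \<le> q \<Longrightarrow> v (E a) = 0"
  shows "br q n (proj2 q u) (proj2 q v) = br q n u v"
proof -
  have summand: "proj2 q u (E a) * proj2 q v (E b) * strc q a b m = u (E a) * v (E b) * strc q a b m"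
    if "1 \<le> a" "1 \<le> b" for a b m
  proof -
    consider "a \<le> q" "b \<le> q" | "(a \<le> q) \<noteq> (b \<le> q)" | "q < a" "q < b" by linarith
    then show ?thesis
    proof cases
      case 1
      then have "a = 1 \<and> b = 1 \<or> u (E a) = 0 \<or> v (E b) = 0" using u v that by force
      with 1 strc_1_1 show ?thesis by auto
    qed (use strc_first_block_other_block[OF q that] in auto)
  qed
  show ?thesis
    by (rule ext) (auto simp del: proj2_E simp: br_def summand split: idx.split intro!: sum.cong)
qed

lemma br_basisE_1_eq_0:
  assumes q: "q = 2 \<or> q = 4" and n: "1 \<le> n"
    and x: "\<And>a. 2 \<le> a \<Longrightarrow> a \<le> q \<Longrightarrow> x (E a) = 0"
  shows "br q n (basisE 1) x = 0"
proof (rule ext)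
  fix k show "br q n (basisE 1) x k = 0 k"
    using x br_basisE_1_Zc[OF q n, of x] by (cases k) auto
qed

lemma br_basisE_1_smult_basisE:
  assumes q: "q = 2 \<or> q = 4" and n: "1 \<le> n" and j: "j \<in> {2..q}"
  shows "br q n (basisE 1) (smult x (basisE j)) = smult x (basisZ (j - 1))"
proof (rule ext)
  fix k show "br q n (basisE 1) (smult x (basisE j)) k = smult x (basisZ (j - 1)) k"
    using j br_basisE_1_Zc[OF q n, of "smult x (basisE j)"]
    by (cases k) (auto simp: smult_def basisE_def basisZ_def)
qed

text \<open>Witness: Z_m = [e_1, e_(m+1)].\<close>
lemma ZZ_subset_br_basisE_1_image:
  assumes q: "q = 2 \<or> q = 4" and n: "1 \<le> n"
  shows "ZZ q n \<subseteq> br q n (basisE 1) ` NN q n"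
proof
  fix z assume z: "z \<in> ZZ q n"
  define w :: elt where "w = (\<lambda>k. case k of
    E i \<Rightarrow> if 2 \<le> i \<and> i \<le> q then z (Zc (i - 1)) else 0 | Zc _ \<Rightarrow> 0)"
  have "w \<in> NN q n"
    using le_mult_if_one_le[OF _ n] by (auto simp: NN_def w_def split: if_splits)
  moreover have "z = br q n (basisE 1) w"
  proof (rule ext)
    fix k show "z k = br q n (basisE 1) w k"
      using z q br_basisE_1_Zc[OF q n, of w] by (cases k) (auto simp: ZZ_def NN_def w_def)
  qed
  ultimately show "z \<in> br q n (basisE 1) ` NN q n" by blast
qed

lemma proj2_comp_image_VV2:
  assumes "f ` VV q n \<subseteq> VV q n"
  shows "(proj2 q \<circ> f) ` VV2 q n \<subseteq> VV2 q n"
proof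
  fix v assume "v \<in> (proj2 q \<circ> f) ` VV2 q n"
  then obtain x where x: "x \<in> VV2 q n" and v: "v = proj2 q (f x)" by auto
  from x assms have "f x \<in> VV q n" by (auto simp: VV2_def)
  then show "v \<in> VV2 q n" by (auto simp: v VV2_def VV_def NN_def)
qed

locale lie_hom_fixing_e1 =
  fixes q n :: nat and f :: "elt \<Rightarrow> elt"
  assumes q: "q = 2 \<or> q = 4" and n: "1 \<le> n"
    and hom: "lie_ring_hom q n (NN q n) (NN q n) f"
    and f_e1: "f (basisE 1) = basisE 1"
begin

lemma maps_NN: "x \<in> NN q n \<Longrightarrow> f x \<in> NN q n"
  and add: "x \<in> NN q n \<Longrightarrow> y \<in> NN q n \<Longrightarrow> f (x + y) = f x + f y"
  and br: "x \<in> NN q n \<Longrightarrow> y \<in> NN q n \<Longrightarrow> f (br q n x y) = br q n (f x) (f y)"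
  using hom by (auto simp: lie_ring_hom_def)

lemma zero: "f 0 = 0"
proof -
  have "(0::elt) \<in> NN q n" by (simp add: NN_def)
  from add[OF this this] have "f (0 + 0) = f 0 + f 0" .
  then show ?thesis by simp
qed

lemma basisE_1_in_NN: "basisE 1 \<in> NN q n"
  using q n by (auto simp: NN_def basisE_def)

lemma br_basisE_1: "x \<in> NN q n \<Longrightarrow> f (br q n (basisE 1) x) = br q n (basisE 1) (f x)"
  using br[OF basisE_1_in_NN] f_e1 by simp

lemma E_coord_eq_Zc_coord_br:
  assumes x: "x \<in> NN q n" and m: "1 \<le> m" "m + 1 \<le> q"
  shows "f x (E (m + 1)) = f (br q n (basisE 1) x) (Zc m)"
  using br_basisE_1_Zc[OF q n, of "f x" m] br_basisE_1[OF x] m by simp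

lemma E_coord_vanishes:
  assumes x: "x \<in> NN q n" and x0: "\<And>a. 2 \<le> a \<Longrightarrow> a \<le> q \<Longrightarrow> x (E a) = 0"
    and i: "i \<in> {2..q}"
  shows "f x (E i) = 0"
proof -
  have "f x (E (i - 1 + 1)) = f (br q n (basisE 1) x) (Zc (i - 1))"
    using i by (intro E_coord_eq_Zc_coord_br[OF x]) auto
  moreover have "br q n (basisE 1) x = 0" using q n x0 by (rule br_basisE_1_eq_0)
  ultimately show ?thesis using i zero by simp
qed

lemma smult_basisE_coord_eq_smult_basisZ_coord:
  assumes i: "i \<in> {2..q}" and j: "j \<in> {2..q}"
  shows "f (smult x (basisE j)) (E i) = f (smult x (basisZ (j - 1))) (Zc (i - 1))"
proof -
  have "j \<le> q * n" using j le_mult_if_one_le[OF _ n] by simp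
  with j have "smult x (basisE j) \<in> NN q n" by (auto simp: NN_def smult_def basisE_def)
  then have "f (smult x (basisE j)) (E (i - 1 + 1))
      = f (br q n (basisE 1) (smult x (basisE j))) (Zc (i - 1))"
    using i by (intro E_coord_eq_Zc_coord_br) auto
  also have "br q n (basisE 1) (smult x (basisE j)) = smult x (basisZ (j - 1))"
    by (rule br_basisE_1_smult_basisE[OF q n j])
  finally show ?thesis using i by simp
qed

lemma proj2_fixes_image_ZZ:
  assumes "z \<in> ZZ q n"
  shows "proj2 q (f z) = f z"
proof -
  obtain w where "w \<in> NN q n" "z = br q n (basisE 1) w"
    using ZZ_subset_br_basisE_1_image[OF q n] assms by blast
  then show ?thesis using br_basisE_1 proj2_br by simp
qed

lemma lie_ring_hom_proj2_comp: "lie_ring_hom q n (NN2 q n) (NN2 q n) (proj2 q \<circ> f)"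
  unfolding lie_ring_hom_def
proof (intro conjI ballI)
  have "proj2 q v \<in> NN2 q n" if "v \<in> NN q n" for v
    using that by (auto simp: NN2_def NN_def)
  then show "(proj2 q \<circ> f) ` NN2 q n \<subseteq> NN2 q n"
    using maps_NN by (auto simp: NN2_def)
next
  fix x y assume x: "x \<in> NN2 q n" and y: "y \<in> NN2 q n"
  then have xy: "x \<in> NN q n" "y \<in> NN q n" by (simp_all add: NN2_def)
  then show "(proj2 q \<circ> f) (x + y) = (proj2 q \<circ> f) x + (proj2 q \<circ> f) y"
    by (simp add: add proj2_add)
  have "f x (E a) = 0" "f y (E a) = 0" if "2 \<le> a" "a \<le> q" for a
    using that x y by (auto intro!: E_coord_vanishes simp: xy NN2_def)
  with q have "br q n (proj2 q (f x)) (proj2 q (f y)) = br q n (f x) (f y)"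
    by (intro br_proj2) auto
  with xy show "(proj2 q \<circ> f) (br q n x y) = br q n ((proj2 q \<circ> f) x) ((proj2 q \<circ> f) y)"
    by (simp add: br proj2_br)
qed

end

theorem lemma6p4:
  fixes q n :: nat and f :: "elt \<Rightarrow> elt"
  assumes q: "q = 2 \<or> q = 4" and n: "n \<ge> 1"
    and hom: "lie_ring_hom q n (NN q n) (NN q n) f"
    and fV: "f ` VV q n \<subseteq> VV q n"
    and fZ: "\<forall>i\<in>{1..q-1}. f (basisZ i) \<noteq> 0"
    and fe1: "f (basisE 1) = basisE 1"
  defines "g \<equiv> proj2 q \<circ> f"
  shows "(lie_ring_hom q n (NN2 q n) (NN2 q n) g
          \<and> g ` VV2 q n \<subseteq> VV2 q n
          \<and> (\<forall>i\<in>{1..q-1}. g (basisZ i) \<noteq> 0)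
          \<and> (\<forall>z\<in>ZZ q n. g z = f z))
       \<and> (\<forall>X\<in>W1 q n. \<forall>i\<in>{2..q}. f X (E i) = 0)
       \<and> (\<forall>x::real. \<forall>i\<in>{2..q}. \<forall>j\<in>{2..q}.
            f (smult x (basisE j)) (E i) = f (smult x (basisZ (j-1))) (Zc (i-1)))"
proof -
  interpret lie_hom_fixing_e1 q n f
    using q n hom fe1 by unfold_locales
  have g_ZZ: "\<forall>z\<in>ZZ q n. g z = f z"
    by (simp add: g_def proj2_fixes_image_ZZ)
  moreover have "\<forall>i\<in>{1..q-1}. g (basisZ i) \<noteq> 0"
  proof
    fix i assume i: "i \<in> {1..q-1}"
    then have "basisZ i \<in> ZZ q n" by (auto simp: ZZ_def NN_def basisZ_def)
    with g_ZZ fZ i show "g (basisZ i) \<noteq> 0" by auto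
  qed
  moreover have "\<forall>X\<in>W1 q n. \<forall>i\<in>{2..q}. f X (E i) = 0"
    by (auto simp: W1_def VV_def intro!: E_coord_vanishes)
  ultimately show ?thesis
    using lie_ring_hom_proj2_comp proj2_comp_image_VV2[OF fV]
      smult_basisE_coord_eq_smult_basisZ_coord
    unfolding g_def by blast
qed

end
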